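(* Let $G$ be a finite $p$-group, $k$ a field of characteristic $p$, and $I$ a non-zero proper ideal of $kG$. Then $I$, as a $kG$-module, is indecomposable and projective-free. In particular, every non-zero power $J^i(kG)$ of the Jacobson radical $J(kG)$ is an indecomposable projective-free $kG$-module.
   Context: A $kG$-module is projective-free if it has no non-zero projective direct summand (submodule). $J(kG)$ denotes the Jacobson radical of $kG$. *)

theory Defs
  imports "HOL-Algebra.Group" "HOL-Library.Function_Algebras" "HOL-Computational_Algebra.Primes"
begin

text \<open>Elements of kG are functions G -> k vanishing outside the carrier of G
  (sum over g of a_g g  corresponds to the function g |-> a_g).
  Addition is pointwise, multiplication is convolution.\<close>

definition grpalg :: "('g, 'm) monoid_scheme \<Rightarrow> ('g \<Rightarrow> 'k::field) set" where
  "grpalg G = {f. \<forall>x. x \<notin> carrier G \<longrightarrow> f x = 0}"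

definition gmult :: "('g, 'm) monoid_scheme \<Rightarrow> ('g \<Rightarrow> 'k::field) \<Rightarrow> ('g \<Rightarrow> 'k) \<Rightarrow> ('g \<Rightarrow> 'k)" where
  "gmult G f h = (\<lambda>x. if x \<in> carrier G
      then (\<Sum>y\<in>carrier G. f y * h (inv\<^bsub>G\<^esub> y \<otimes>\<^bsub>G\<^esub> x)) else 0)"

definition ga_ideal :: "('g, 'm) monoid_scheme \<Rightarrow> ('g \<Rightarrow> 'k::field) set \<Rightarrow> bool" where
  "ga_ideal G I \<longleftrightarrow> I \<subseteq> grpalg G \<and> 0 \<in> I \<and> (\<forall>a\<in>I. \<forall>b\<in>I. a + b \<in> I)
     \<and> (\<forall>r\<in>grpalg G. \<forall>a\<in>I. gmult G r a \<in> I \<and> gmult G a r \<in> I)"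

text \<open>(Left) kG-submodules of the regular module kG, i.e. left ideals.
  (Closure under k-scalars follows from closure under multiplication by c*1.)\<close>
definition ga_submod :: "('g, 'm) monoid_scheme \<Rightarrow> ('g \<Rightarrow> 'k::field) set \<Rightarrow> bool" where
  "ga_submod G M \<longleftrightarrow> M \<subseteq> grpalg G \<and> 0 \<in> M \<and> (\<forall>a\<in>M. \<forall>b\<in>M. a + b \<in> M)
     \<and> (\<forall>r\<in>grpalg G. \<forall>a\<in>M. gmult G r a \<in> M)"

definition ga_summand :: "('g, 'm) monoid_scheme \<Rightarrow> ('g \<Rightarrow> 'k::field) set \<Rightarrow> ('g \<Rightarrow> 'k) set \<Rightarrow> bool" where
  "ga_summand G A M \<longleftrightarrow> (\<exists>B. ga_submod G A \<and> ga_submod G B \<and> A \<subseteq> M \<and> B \<subseteq> M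
      \<and> A \<inter> B = {0} \<and> M = {a + b | a b. a \<in> A \<and> b \<in> B})"

definition ga_indecomposable :: "('g, 'm) monoid_scheme \<Rightarrow> ('g \<Rightarrow> 'k::field) set \<Rightarrow> bool" where
  "ga_indecomposable G M \<longleftrightarrow> M \<noteq> {0} \<and>
     (\<forall>A B. ga_submod G A \<and> ga_submod G B \<and> A \<subseteq> M \<and> B \<subseteq> M \<and> A \<inter> B = {0}
        \<and> M = {a + b | a b. a \<in> A \<and> b \<in> B} \<longrightarrow> A = {0} \<or> B = {0})"

definition ga_free :: "('g, 'm) monoid_scheme \<Rightarrow> nat \<Rightarrow> (nat \<Rightarrow> 'g \<Rightarrow> 'k::field) set" where
  "ga_free G n = {v. (\<forall>j<n. v j \<in> grpalg G) \<and> (\<forall>j\<ge>n. v j = 0)}"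

text \<open>Projectivity of a (finitely generated) kG-module Q (here Q a submodule of kG,
  hence finite dimensional): Q is a retract, via kG-linear maps, of a free
  module (kG)^n of finite rank.\<close>
definition ga_projective :: "('g, 'm) monoid_scheme \<Rightarrow> ('g \<Rightarrow> 'k::field) set \<Rightarrow> bool" where
  "ga_projective G Q \<longleftrightarrow> (\<exists>n (i :: ('g \<Rightarrow> 'k) \<Rightarrow> nat \<Rightarrow> 'g \<Rightarrow> 'k) r.
      (\<forall>q\<in>Q. i q \<in> ga_free G n)
    \<and> (\<forall>q\<in>Q. \<forall>q'\<in>Q. i (q + q') = i q + i q')
    \<and> (\<forall>a\<in>grpalg G. \<forall>q\<in>Q. i (gmult G a q) = (\<lambda>j. gmult G a (i q j)))
    \<and> (\<forall>v\<in>ga_free G n. r v \<in> Q)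
    \<and> (\<forall>v\<in>ga_free G n. \<forall>w\<in>ga_free G n. r (v + w) = r v + r w)
    \<and> (\<forall>a\<in>grpalg G. \<forall>v\<in>ga_free G n. r (\<lambda>j. gmult G a (v j)) = gmult G a (r v))
    \<and> (\<forall>q\<in>Q. r (i q) = q))"

definition ga_projective_free :: "('g, 'm) monoid_scheme \<Rightarrow> ('g \<Rightarrow> 'k::field) set \<Rightarrow> bool" where
  "ga_projective_free G M \<longleftrightarrow> (\<forall>Q. ga_summand G Q M \<and> Q \<noteq> {0} \<longrightarrow> \<not> ga_projective G Q)"

definition ga_max_left :: "('g, 'm) monoid_scheme \<Rightarrow> ('g \<Rightarrow> 'k::field) set \<Rightarrow> bool" where
  "ga_max_left G M \<longleftrightarrow> ga_submod G M \<and> M \<noteq> grpalg G \<and>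
     (\<forall>N. ga_submod G N \<and> M \<subseteq> N \<longrightarrow> N = M \<or> N = grpalg G)"

definition ga_jacobson :: "('g, 'm) monoid_scheme \<Rightarrow> ('g \<Rightarrow> 'k::field) set" where
  "ga_jacobson G = grpalg G \<inter> \<Inter>{M. ga_max_left G M}"

inductive_set ga_prod :: "('g, 'm) monoid_scheme \<Rightarrow> ('g \<Rightarrow> 'k::field) set \<Rightarrow> ('g \<Rightarrow> 'k) set \<Rightarrow> ('g \<Rightarrow> 'k) set"
  for G A B where
  zero: "0 \<in> ga_prod G A B"
| prod: "a \<in> A \<Longrightarrow> b \<in> B \<Longrightarrow> gmult G a b \<in> ga_prod G A B"
| add: "x \<in> ga_prod G A B \<Longrightarrow> y \<in> ga_prod G A B \<Longrightarrow> x + y \<in> ga_prod G A B"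

fun ga_jpow :: "('g, 'm) monoid_scheme \<Rightarrow> nat \<Rightarrow> ('g \<Rightarrow> 'k::field) set" where
  "ga_jpow G 0 = grpalg G"
| "ga_jpow G (Suc i) = ga_prod G (ga_jpow G i) (ga_jacobson G)"

end

theory Submission
  imports Defs "HOL-Algebra.Group_Action" "HOL.Vector_Spaces"
begin

(* Let G be a finite p-group and k a field of characteristic p. Every non-zero left ideal M
   of kG contains the norm element N = sum of all g in G: for 0 \<noteq> m \<in> M the set F_p G m is a
   finite F_p-vector space, so its size is divisible by p, and G permutes it; since G is a
   p-group, the number of fixed points is divisible by p as well, so some non-zero element of
   F_p G m is fixed by G, and the fixed elements of kG are the multiples of N.
   Hence two non-zero summands of M would both contain N, so M is indecomposable. Since
   N x = \<epsilon>(x) N for the augmentation \<epsilon>, the left annihilator of an x with \<epsilon>(x) \<noteq> 0 is a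
   left ideal not containing N, hence zero; so y \<mapsto> y x is injective, hence bijective on the
   finite-dimensional kG, and a left ideal containing x is all of kG. If Q \<noteq> 0 is a retract of
   (kG)^n via i : Q \<rightarrow> (kG)^n and r, the components of i N are fixed by G, hence of the form
   c_j N, and r maps (c_j)_j to some u \<in> Q with N u = r (i N) = N, i.e. \<epsilon>(u) = 1; so Q = kG,
   which cannot be a summand of a proper M. Finally J(kG) lies in the augmentation ideal, a
   maximal left ideal, so the powers J^i with i \<ge> 1 are proper. *)

section \<open>Counting and linear algebra\<close>

lemma card_dvd_card_if_translation_closed:
  fixes S H :: "'a::ab_group_add set"
  assumes "finite S" and "0 \<in> H"
    and add: "\<And>a b. a \<in> H \<Longrightarrow> b \<in> H \<Longrightarrow> a + b \<in> H"
    and uminus: "\<And>a. a \<in> H \<Longrightarrow> - a \<in> H"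
    and translate: "\<And>s h. s \<in> S \<Longrightarrow> h \<in> H \<Longrightarrow> s + h \<in> S"
  shows "card H dvd card S"
proof -
  define coset where "coset s = (+) s ` H" for s
  have coset_eq: "coset t = coset s" if t: "t \<in> coset s" for s t
  proof -
    obtain h where h: "h \<in> H" "t = s + h" using t unfolding coset_def by blast
    have "t + h' = s + (h + h')" "s + h' = t + (- h + h')" for h'
      using h(2) by (simp_all add: algebra_simps)
    then show ?thesis
      using h(1) add uminus unfolding coset_def by blast
  qed
  have union: "\<Union>(coset ` S) = S"
    using assms(2) translate unfolding coset_def by force
  have "card H * card (coset ` S) = card (\<Union>(coset ` S))"
  proof (rule card_partition)
    show "finite (coset ` S)" "finite (\<Union>(coset ` S))"
      using assms(1) union by simp_all
    show "card c = card H" if "c \<in> coset ` S" for c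
      using that by (auto simp: coset_def inj_on_def card_image)
    show "c1 \<inter> c2 = {}" if "c1 \<in> coset ` S" "c2 \<in> coset ` S" "c1 \<noteq> c2" for c1 c2
      using that coset_eq by blast
  qed
  then show ?thesis
    using union by (metis dvd_triv_left)
qed

lemma card_Ints:
  assumes "CHAR('a::ring_1) > 0"
  shows "card (\<int> :: 'a set) = CHAR('a)"
proof -
  let ?c = "int CHAR('a)"
  have mod_eq: "(of_int z :: 'a) = of_int (z mod ?c)" for z
  proof -
    have "(of_int z :: 'a) = of_int (?c * (z div ?c) + z mod ?c)"
      by simp
    also have "\<dots> = of_int (z mod ?c)"
      by (simp only: of_int_add of_int_mult of_int_of_nat_eq of_nat_CHAR) simp
    finally show ?thesis .
  qed
  have mod_range: "z mod ?c \<in> {0..<?c}" for z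
    using assms by simp
  have "range (of_int :: int \<Rightarrow> 'a) = of_int ` {0..<?c}"
  proof (intro subset_antisym subsetI)
    fix y :: 'a assume "y \<in> range of_int"
    then obtain z where "y = of_int z" by blast
    then show "y \<in> of_int ` {0..<?c}"
      using mod_eq mod_range by (metis image_eqI)
  qed blast
  moreover have "inj_on (of_int :: int \<Rightarrow> 'a) {0..<?c}"
  proof (rule inj_onI)
    fix a b assume ab: "a \<in> {0..<?c}" "b \<in> {0..<?c}" and "(of_int a :: 'a) = of_int b"
    then have "(of_int (a - b) :: 'a) = 0"
      by simp
    then have dvd: "?c dvd a - b"
      by (simp only: of_int_eq_0_iff_char_dvd)
    show "a = b"
    proof (rule ccontr)
      assume "a \<noteq> b"
      then have "?c \<le> \<bar>a - b\<bar>"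
        using dvd_imp_le_int[OF _ dvd] by simp
      then show False
        using ab by auto
    qed
  qed
  ultimately show ?thesis
    by (simp add: Ints_def card_image)
qed

lemma (in group_action) orbit_eq_singleton_iff:
  assumes "x \<in> E"
  shows "orbit G \<phi> x = {x} \<longleftrightarrow> (\<forall>g\<in>carrier G. \<phi> g x = x)"
  using orbit_refl[OF assms] unfolding orbit_def by blast

lemma (in group_action) prime_dvd_card_orbit:
  assumes "prime p" and "order G = p ^ n" and "x \<in> E" and "orbit G \<phi> x \<noteq> {x}"
  shows "p dvd card (orbit G \<phi> x)"
proof -
  have "card (orbit G \<phi> x) dvd p ^ n"
    using orbit_stabilizer_theorem[OF assms(3)] assms(2) by (metis dvd_triv_left)
  then obtain i where i: "card (orbit G \<phi> x) = p ^ i"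
    using divides_primepow_nat[OF assms(1)] by blast
  moreover have "i \<noteq> 0"
  proof
    assume "i = 0"
    then show False
      using i orbit_refl[OF assms(3)] assms(4) by (metis card_1_singletonE power_0 singletonD)
  qed
  ultimately show ?thesis
    by simp
qed

lemma (in group_action) card_fixed_points_mod_eq:
  assumes "finite E" and "prime p" and "order G = p ^ n"
  shows "card {x \<in> E. \<forall>g\<in>carrier G. \<phi> g x = x} mod p = card E mod p"
proof -
  define F where "F = {x \<in> E. \<forall>g\<in>carrier G. \<phi> g x = x}"
  have orbit_in_orbits: "orbit G \<phi> x \<in> orbits G E \<phi>" if "x \<in> E" for x
    using that unfolding orbits_def by blast
  have orbit_subset: "orbit G \<phi> x \<subseteq> E - F" if x: "x \<in> E - F" for x
  proof
    fix y assume y: "y \<in> orbit G \<phi> x"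
    then have "y \<in> E"
      using x element_image unfolding orbit_def by blast
    have same_orbit: "orbit G \<phi> x = orbit G \<phi> y"
      using disjoint_union[OF orbit_in_orbits[of x] orbit_in_orbits[of y]] x y \<open>y \<in> E\<close>
        orbit_refl[OF \<open>y \<in> E\<close>] by blast
    have "y \<notin> F"
    proof
      assume "y \<in> F"
      then have "orbit G \<phi> x = {y}"
        using same_orbit orbit_eq_singleton_iff[OF \<open>y \<in> E\<close>]
        unfolding F_def by blast
      then have "x = y"
        using x orbit_refl[of x] by blast
      with x \<open>y \<in> F\<close> show False
        by blast
    qed
    with \<open>y \<in> E\<close> show "y \<in> E - F"
      by blast
  qed
  have "E - F = \<Union>(orbit G \<phi> ` (E - F))"
    using orbit_subset orbit_refl by blast
  also have "card \<dots> = (\<Sum>A\<in>orbit G \<phi> ` (E - F). card A)"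
  proof (rule card_Union_disjoint)
    show "pairwise disjnt (orbit G \<phi> ` (E - F))"
      using disjoint_union[OF orbit_in_orbits orbit_in_orbits]
      by (intro pairwise_imageI) (auto simp: disjnt_def)
    show "finite A" if "A \<in> orbit G \<phi> ` (E - F)" for A
      using that orbit_subset assms(1) finite_subset by blast
  qed
  finally have "p dvd card (E - F)"
    using prime_dvd_card_orbit[OF assms(2,3)] orbit_eq_singleton_iff
    by (auto simp: F_def intro!: dvd_sum)
  moreover have "card E = card F + card (E - F)"
  proof -
    have "F \<subseteq> E" unfolding F_def by blast
    moreover have "finite F"
      using \<open>F \<subseteq> E\<close> assms(1) by (rule finite_subset)
    ultimately show ?thesis
      using card_Diff_subset[of F E] card_mono[OF assms(1), of F] by simp
  qed
  ultimately have "card F mod p = card E mod p"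
    by (auto elim!: dvdE)
  then show ?thesis
    unfolding F_def .
qed

lemma (in vector_space) linear_inj_on_span_imp_surj_on:
  assumes f: "Vector_Spaces.linear scale scale f" and "finite B"
    and into: "f ` span B \<subseteq> span B" and inj: "inj_on f (span B)"
  shows "f ` span B = span B"
proof -
  interpret f: Vector_Spaces.linear scale scale f by (rule f)
  obtain C where C: "C \<subseteq> B" "independent C" "B \<subseteq> span C"
    using maximal_independent_subset[of B] by blast
  have span_C: "span C = span B"
    using C by (simp add: span_eq span_superset subset_trans)
  have "finite C"
    using C(1) assms(2) finite_subset by blast
  have indep: "independent (f ` C)"
    using C(2) inj span_C by (simp add: f.independent_injective_image)
  have card: "card (f ` C) = card C"
    using inj span_C span_superset by (metis card_image inj_on_subset)
  have "span C \<subseteq> span (f ` C)"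
  proof
    fix x assume x: "x \<in> span C"
    show "x \<in> span (f ` C)"
    proof (rule ccontr)
      assume x_notin: "x \<notin> span (f ` C)"
      have "insert x (f ` C) \<subseteq> span C"
        using x into span_C span_superset by blast
      then have "card (insert x (f ` C)) \<le> card C"
        using independent_span_bound[OF \<open>finite C\<close> independent_insertI[OF x_notin indep]] by blast
      moreover have "x \<notin> f ` C"
        using x_notin span_superset by blast
      ultimately show False
        using card \<open>finite C\<close> by simp
    qed
  qed
  then show ?thesis
    using into span_C by (metis f.span_image subset_antisym)
qed

section \<open>Arithmetic in the group algebra\<close>

definition ga_scale :: "'k::field \<Rightarrow> ('g \<Rightarrow> 'k) \<Rightarrow> 'g \<Rightarrow> 'k" where
  "ga_scale c f = (\<lambda>x. c * f x)"

definition ga_delta :: "'g \<Rightarrow> 'g \<Rightarrow> 'k::field" where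
  "ga_delta g = (\<lambda>x. if x = g then 1 else 0)"

definition ga_norm :: "('g, 'm) monoid_scheme \<Rightarrow> 'g \<Rightarrow> 'k::field" where
  "ga_norm G = (\<lambda>x. if x \<in> carrier G then 1 else 0)"

definition ga_aug :: "('g, 'm) monoid_scheme \<Rightarrow> ('g \<Rightarrow> 'k::field) \<Rightarrow> 'k" where
  "ga_aug G f = (\<Sum>x\<in>carrier G. f x)"

lemma ga_scale_apply [simp]: "ga_scale c f x = c * f x"
  by (simp add: ga_scale_def)

lemma vector_space_ga_scale: "vector_space (ga_scale :: 'k::field \<Rightarrow> ('g \<Rightarrow> 'k) \<Rightarrow> 'g \<Rightarrow> 'k)"
  by unfold_locales (simp_all add: fun_eq_iff algebra_simps)

lemma sum_fun_apply: "sum f A x = (\<Sum>i\<in>A. f i x)"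
  by (induction A rule: infinite_finite_induct) auto

lemma zero_in_grpalg: "0 \<in> grpalg G"
  by (simp add: grpalg_def)

lemma add_in_grpalg: "a \<in> grpalg G \<Longrightarrow> b \<in> grpalg G \<Longrightarrow> a + b \<in> grpalg G"
  by (simp add: grpalg_def)

lemma ga_scale_in_grpalg: "f \<in> grpalg G \<Longrightarrow> ga_scale c f \<in> grpalg G"
  by (simp add: grpalg_def)

lemma ga_delta_in_grpalg: "g \<in> carrier G \<Longrightarrow> ga_delta g \<in> grpalg G"
  by (auto simp: ga_delta_def grpalg_def)

lemma ga_norm_in_grpalg: "ga_norm G \<in> grpalg G"
  by (simp add: ga_norm_def grpalg_def)

lemma gmult_in_grpalg: "gmult G a b \<in> grpalg G"
  by (simp add: gmult_def grpalg_def)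

lemma gmult_add_left: "gmult G (a + b) c = gmult G a c + gmult G b c"
  by (auto simp: gmult_def fun_eq_iff distrib_right sum.distrib)

lemma gmult_add_right: "gmult G a (b + c) = gmult G a b + gmult G a c"
  by (auto simp: gmult_def fun_eq_iff distrib_left sum.distrib)

lemma gmult_scale_left: "gmult G (ga_scale c a) b = ga_scale c (gmult G a b)"
  by (auto simp: gmult_def fun_eq_iff sum_distrib_left ac_simps)

lemma gmult_scale_right: "gmult G a (ga_scale c b) = ga_scale c (gmult G a b)"
  by (auto simp: gmult_def fun_eq_iff sum_distrib_left ac_simps)

lemma gmult_zero_left: "gmult G 0 a = 0"
  by (simp add: gmult_def fun_eq_iff)

lemma gmult_zero_right: "gmult G a 0 = 0"
  by (simp add: gmult_def fun_eq_iff)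

context group
begin

lemma sum_carrier_mult_left:
  "z \<in> carrier G \<Longrightarrow> (\<Sum>w\<in>carrier G. F (z \<otimes> w)) = sum F (carrier G)"
  by (rule sum.reindex_bij_betw, rule bij_betw_byWitness[where f' = "\<lambda>y. inv z \<otimes> y"])
    (auto simp: m_assoc[symmetric])

lemma sum_carrier_inv_mult:
  "x \<in> carrier G \<Longrightarrow> (\<Sum>y\<in>carrier G. F (inv y \<otimes> x)) = sum F (carrier G)"
  by (rule sum.reindex_bij_betw, rule bij_betw_byWitness[where f' = "\<lambda>w. x \<otimes> inv w"])
    (auto simp: m_assoc inv_mult_group, simp add: m_assoc[symmetric])

lemma gmult_assoc: "gmult G (gmult G a b) c = gmult G a (gmult G b c)"
proof (rule ext)
  fix x
  show "gmult G (gmult G a b) c x = gmult G a (gmult G b c) x"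
  proof (cases "x \<in> carrier G")
    case x: True
    have "gmult G (gmult G a b) c x
        = (\<Sum>y\<in>carrier G. \<Sum>z\<in>carrier G. a z * b (inv z \<otimes> y) * c (inv y \<otimes> x))"
      using x by (simp add: gmult_def sum_distrib_right)
    also have "\<dots> = (\<Sum>z\<in>carrier G. \<Sum>y\<in>carrier G. a z * b (inv z \<otimes> y) * c (inv y \<otimes> x))"
      by (rule sum.swap)
    also have "\<dots> = (\<Sum>z\<in>carrier G. \<Sum>w\<in>carrier G. a z * b w * c (inv w \<otimes> (inv z \<otimes> x)))"
    proof (rule sum.cong[OF refl])
      fix z assume z: "z \<in> carrier G"
      have "(\<Sum>y\<in>carrier G. a z * b (inv z \<otimes> y) * c (inv y \<otimes> x))
          = (\<Sum>w\<in>carrier G. a z * b (inv z \<otimes> (z \<otimes> w)) * c (inv (z \<otimes> w) \<otimes> x))"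
        using sum_carrier_mult_left[OF z, of "\<lambda>y. a z * b (inv z \<otimes> y) * c (inv y \<otimes> x)"]
        by simp
      also have "\<dots> = (\<Sum>w\<in>carrier G. a z * b w * c (inv w \<otimes> (inv z \<otimes> x)))"
        using z x by (intro sum.cong refl) (simp add: m_assoc[symmetric] inv_mult_group)
      finally show "(\<Sum>y\<in>carrier G. a z * b (inv z \<otimes> y) * c (inv y \<otimes> x))
          = (\<Sum>w\<in>carrier G. a z * b w * c (inv w \<otimes> (inv z \<otimes> x)))" .
    qed
    also have "\<dots> = gmult G a (gmult G b c) x"
      using x by (simp add: gmult_def sum_distrib_left mult.assoc)
    finally show ?thesis .
  qed (simp add: gmult_def)
qed

lemma ga_aug_gmult: "ga_aug G (gmult G a b) = ga_aug G a * ga_aug G b"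
proof -
  have "ga_aug G (gmult G a b) = (\<Sum>x\<in>carrier G. \<Sum>y\<in>carrier G. a y * b (inv y \<otimes> x))"
    by (simp add: ga_aug_def gmult_def)
  also have "\<dots> = (\<Sum>y\<in>carrier G. \<Sum>x\<in>carrier G. a y * b (inv y \<otimes> x))"
    by (rule sum.swap)
  also have "\<dots> = (\<Sum>y\<in>carrier G. a y * ga_aug G b)"
    by (intro sum.cong refl) (simp add: sum_distrib_left[symmetric] ga_aug_def sum_carrier_mult_left)
  finally show ?thesis
    by (simp add: ga_aug_def sum_distrib_right)
qed

lemma ga_norm_nonzero: "ga_norm G \<noteq> (0 :: 'a \<Rightarrow> 'k::field)"
proof
  assume "ga_norm G = (0 :: 'a \<Rightarrow> 'k)"
  then have "ga_norm G \<one> = (0 :: 'k)"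
    by simp
  then show False
    by (simp add: ga_norm_def)
qed

end

locale finite_group = group +
  assumes finite_carrier: "finite (carrier G)"
begin

lemma gmult_delta_left:
  assumes "g \<in> carrier G"
  shows "gmult G (ga_delta g) f = (\<lambda>x. if x \<in> carrier G then f (inv g \<otimes> x) else 0)"
proof -
  have "(\<Sum>y\<in>carrier G. ga_delta g y * f (inv y \<otimes> x))
      = (\<Sum>y\<in>carrier G. if y = g then f (inv y \<otimes> x) else 0)" for x
    by (intro sum.cong) (auto simp: ga_delta_def)
  then have "(\<Sum>y\<in>carrier G. ga_delta g y * f (inv y \<otimes> x)) = f (inv g \<otimes> x)" for x
    using assms finite_carrier by simp
  then show ?thesis
    by (intro ext) (simp add: gmult_def)
qed

lemma gmult_delta_one_left: "f \<in> grpalg G \<Longrightarrow> gmult G (ga_delta \<one>) f = f"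
  by (auto simp: gmult_delta_left grpalg_def fun_eq_iff)

lemma gmult_delta_one_right:
  assumes "f \<in> grpalg G"
  shows "gmult G f (ga_delta \<one>) = f"
proof (rule ext)
  fix x
  have "(\<Sum>y\<in>carrier G. f y * ga_delta \<one> (inv y \<otimes> x)) = f x" if "x \<in> carrier G"
  proof -
    have "inv y \<otimes> x = \<one> \<longleftrightarrow> y = x" if "y \<in> carrier G" for y
      using inv_solve_left'[OF one_closed that \<open>x \<in> carrier G\<close>] that by auto
    then show ?thesis
      using that finite_carrier by (simp add: ga_delta_def if_distrib cong: if_cong)
  qed
  then show "gmult G f (ga_delta \<one>) x = f x"
    using assms by (simp add: gmult_def grpalg_def)
qed

lemma gmult_delta_delta:
  assumes "g \<in> carrier G" and "h \<in> carrier G"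
  shows "gmult G (ga_delta g) (ga_delta h) = ga_delta (g \<otimes> h)"
proof -
  have "inv g \<otimes> x = h \<longleftrightarrow> x = g \<otimes> h" if "x \<in> carrier G" for x
    using assms that by (simp add: inv_solve_left')
  then show ?thesis
    using assms by (simp add: gmult_delta_left) (auto simp: ga_delta_def)
qed

lemma gmult_norm_left: "gmult G (ga_norm G) f = ga_scale (ga_aug G f) (ga_norm G)"
  by (auto simp: fun_eq_iff gmult_def ga_norm_def ga_aug_def sum_carrier_inv_mult)

lemma gmult_norm_right: "gmult G f (ga_norm G) = ga_scale (ga_aug G f) (ga_norm G)"
  by (auto simp: fun_eq_iff gmult_def ga_norm_def ga_aug_def)

lemma ga_aug_delta: "g \<in> carrier G \<Longrightarrow> ga_aug G (ga_delta g) = 1"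
  using finite_carrier by (simp add: ga_aug_def ga_delta_def)

lemma fixed_eq_scale_norm:
  assumes "f \<in> grpalg G" and fixed: "\<And>g. g \<in> carrier G \<Longrightarrow> gmult G (ga_delta g) f = f"
  shows "f = ga_scale (f \<one>) (ga_norm G)"
proof (rule ext)
  fix x
  show "f x = ga_scale (f \<one>) (ga_norm G) x"
  proof (cases "x \<in> carrier G")
    case True
    then have "f (inv x \<otimes> x) = f x"
      using fun_cong[OF fixed[OF True], of x] by (simp add: gmult_delta_left)
    then show ?thesis
      using True by (simp add: ga_norm_def)
  qed (use assms(1) in \<open>simp add: ga_norm_def grpalg_def\<close>)
qed

lemma ga_submod_scale:
  assumes "ga_submod G M" and "a \<in> M"
  shows "ga_scale c a \<in> M"
proof -
  have "ga_scale c a = gmult G (ga_scale c (ga_delta \<one>)) a"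
    using assms by (simp add: gmult_scale_left gmult_delta_one_left ga_submod_def subset_iff)
  then show ?thesis
    using assms by (simp add: ga_submod_def ga_scale_in_grpalg ga_delta_in_grpalg)
qed

lemma ga_submod_eq_grpalg_if_delta_one:
  assumes "ga_submod G M" and "ga_delta \<one> \<in> M"
  shows "M = grpalg G"
proof
  show "M \<subseteq> grpalg G"
    using assms(1) by (simp add: ga_submod_def)
  show "grpalg G \<subseteq> M"
    using assms gmult_delta_one_right by (metis ga_submod_def subsetI)
qed

lemma span_ga_delta: "module.span ga_scale (ga_delta ` carrier G) = grpalg G"
proof -
  interpret V: vector_space "ga_scale :: 'k::field \<Rightarrow> ('a \<Rightarrow> 'k) \<Rightarrow> 'a \<Rightarrow> 'k"
    by (rule vector_space_ga_scale)
  have "V.subspace (grpalg G)"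
    by (rule V.subspaceI) (auto simp: grpalg_def)
  then have "V.span (ga_delta ` carrier G) \<subseteq> grpalg G"
    by (rule V.span_minimal[rotated]) (auto simp: ga_delta_in_grpalg)
  moreover have "f \<in> V.span (ga_delta ` carrier G)" if f: "f \<in> grpalg G" for f
  proof -
    have "f = (\<Sum>h\<in>carrier G. ga_scale (f h) (ga_delta h))"
      using f finite_carrier by (auto simp: fun_eq_iff sum_fun_apply ga_delta_def grpalg_def
          if_distrib cong: if_cong)
    also have "\<dots> \<in> V.span (ga_delta ` carrier G)"
      by (intro V.span_sum V.span_scale V.span_base) auto
    finally show ?thesis .
  qed
  ultimately show ?thesis
    by blast
qed

lemma left_invertible_if_not_right_zero_divisor:
  fixes x :: "'a \<Rightarrow> 'k::field"
  assumes "x \<in> grpalg G"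
    and no_zero_divisor: "\<And>y. y \<in> grpalg G \<Longrightarrow> gmult G y x = 0 \<Longrightarrow> y = 0"
  shows "\<exists>y\<in>grpalg G. gmult G y x = ga_delta \<one>"
proof -
  interpret V: vector_space "ga_scale :: 'k \<Rightarrow> ('a \<Rightarrow> 'k) \<Rightarrow> 'a \<Rightarrow> 'k"
    by (rule vector_space_ga_scale)
  let ?R = "\<lambda>y. gmult G y x"
  have lin: "Vector_Spaces.linear ga_scale ga_scale ?R"
    by (simp add: linear_iff_module_hom module_hom_iff V.module_axioms gmult_add_left
        gmult_scale_left)
  interpret R: Vector_Spaces.linear ga_scale ga_scale ?R
    by (rule lin)
  have "V.subspace (grpalg G)"
    by (metis V.subspace_span span_ga_delta)
  then have "inj_on ?R (V.span (ga_delta ` carrier G))"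
    using no_zero_divisor by (simp add: R.inj_on_iff_eq_0 span_ga_delta)
  then have "?R ` grpalg G = grpalg G"
    using V.linear_inj_on_span_imp_surj_on[OF lin, of "ga_delta ` carrier G"] finite_carrier
    unfolding span_ga_delta by (simp add: image_subset_iff gmult_in_grpalg)
  then show ?thesis
    using ga_delta_in_grpalg[OF one_closed] by (metis imageE)
qed

lemma left_translation_group_action:
  assumes "S \<subseteq> grpalg G"
    and stable: "\<And>g s. g \<in> carrier G \<Longrightarrow> s \<in> S \<Longrightarrow> gmult G (ga_delta g) s \<in> S"
  shows "group_action G S (\<lambda>g. \<lambda>s\<in>S. gmult G (ga_delta g) s)"
    (is "group_action G S ?\<phi>")
proof -
  have compose: "gmult G (ga_delta (g \<otimes> h)) s = gmult G (ga_delta g) (gmult G (ga_delta h) s)"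
    if "g \<in> carrier G" "h \<in> carrier G" for g h s
    using that by (simp add: gmult_assoc[symmetric] gmult_delta_delta)
  have cancel: "gmult G (ga_delta h) (gmult G (ga_delta g) s) = s"
    if "g \<in> carrier G" "h \<in> carrier G" "h \<otimes> g = \<one>" "s \<in> S" for g h s
    using that assms(1) compose[of h g s] by (auto simp: gmult_delta_one_left)
  have bij: "?\<phi> g \<in> Bij S" if "g \<in> carrier G" for g
  proof -
    have "bij_betw (?\<phi> g) S S"
      by (rule bij_betw_byWitness[where f' = "?\<phi> (inv g)"])
        (use that stable cancel in \<open>auto simp: image_subset_iff\<close>)
    then show ?thesis
      unfolding Bij_def by simp
  qed
  show ?thesis
    unfolding group_action_def group_hom_def group_hom_axioms_def
  proof (intro conjI homI)
    show "group G" "group (BijGroup S)"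
      by (rule is_group, rule group_BijGroup)
    show "?\<phi> g \<in> carrier (BijGroup S)" if "g \<in> carrier G" for g
      using bij[OF that] by (simp add: BijGroup_def)
    show "?\<phi> (g \<otimes> h) = ?\<phi> g \<otimes>\<^bsub>BijGroup S\<^esub> ?\<phi> h" if "g \<in> carrier G" "h \<in> carrier G" for g h
      using that bij stable by (auto simp: BijGroup_def compose_def compose fun_eq_iff)
  qed
qed

lemma ga_projective_contains_aug_one:
  fixes Q :: "('a \<Rightarrow> 'k::field) set"
  assumes "ga_projective G Q" and N: "ga_norm G \<in> Q"
  shows "\<exists>u\<in>Q. ga_aug G u = 1"
proof -
  obtain k i r where
    i_free: "\<forall>q\<in>Q. i q \<in> ga_free G k" and
    i_hom: "\<forall>a\<in>grpalg G. \<forall>q\<in>Q. i (gmult G a q) = (\<lambda>j. gmult G a (i q j))" and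
    r_Q: "\<forall>v\<in>ga_free G k. r v \<in> Q" and
    r_hom: "\<forall>a\<in>grpalg G. \<forall>v\<in>ga_free G k. r (\<lambda>j. gmult G a (v j)) = gmult G a (r v)" and
    retract: "\<forall>q\<in>Q. r (i q) = q"
    using assms(1) unfolding ga_projective_def by blast
  define v where "v = i (ga_norm G)"
  have v_free: "v \<in> ga_free G k"
    using i_free N unfolding v_def by blast
  then have v_grpalg: "v j \<in> grpalg G" for j
    by (cases "j < k") (auto simp: ga_free_def zero_in_grpalg)
  have v_fixed: "gmult G (ga_delta g) (v j) = v j" if "g \<in> carrier G" for g j
  proof -
    have "gmult G (ga_delta g) (ga_norm G) = ga_norm G"
      using that by (simp add: gmult_norm_right ga_aug_delta fun_eq_iff)
    moreover have "i (gmult G (ga_delta g) (ga_norm G)) = (\<lambda>j. gmult G (ga_delta g) (v j))"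
      using i_hom ga_delta_in_grpalg[OF that] N unfolding v_def by blast
    ultimately show ?thesis
      unfolding v_def by (metis fun_cong)
  qed
  have v_eq: "v j = ga_scale (v j \<one>) (ga_norm G)" for j
    by (rule fixed_eq_scale_norm[OF v_grpalg v_fixed])
  define w where "w j = ga_scale (v j \<one>) (ga_delta \<one>)" for j
  have w_free: "w \<in> ga_free G k"
    using v_free by (auto simp: ga_free_def w_def ga_scale_in_grpalg ga_delta_in_grpalg)
  have "(\<lambda>j. gmult G (ga_norm G) (w j)) = v"
    using v_eq by (simp add: w_def gmult_scale_right gmult_delta_one_right ga_norm_in_grpalg)
  then have "r v = gmult G (ga_norm G) (r w)"
    using r_hom[rule_format, OF ga_norm_in_grpalg w_free] by simp
  moreover have "r v = ga_norm G"
    using retract N unfolding v_def by blast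
  ultimately have "ga_norm G = ga_scale (ga_aug G (r w)) (ga_norm G)"
    by (simp add: gmult_norm_left)
  then have "ga_norm G \<one> = ga_scale (ga_aug G (r w)) (ga_norm G) \<one>"
    by (rule arg_cong)
  then have "ga_aug G (r w) = 1"
    by (simp add: ga_norm_def)
  moreover have "r w \<in> Q"
    using r_Q w_free by blast
  ultimately show ?thesis
    by blast
qed

end

section \<open>The prime-field span of an element\<close>

(* F_p G m, the prime field F_p of k being the image \<int> of the integers *)
definition ga_prime_span :: "('g, 'm) monoid_scheme \<Rightarrow> ('g \<Rightarrow> 'k::field) \<Rightarrow> ('g \<Rightarrow> 'k) set" where
  "ga_prime_span G m = {gmult G x m | x. x \<in> grpalg G \<and> range x \<subseteq> \<int>}"

lemma card_scaled_Ints: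
  fixes m :: "'g \<Rightarrow> 'k::field"
  assumes "CHAR('k) > 0" and "m \<noteq> 0"
  shows "card ((\<lambda>c. ga_scale c m) ` \<int>) = CHAR('k)"
proof -
  obtain y where "m y \<noteq> 0"
    using assms(2) by (auto simp: fun_eq_iff)
  have "inj_on (\<lambda>c. ga_scale c m) \<int>"
  proof (rule inj_onI)
    fix c d assume "ga_scale c m = ga_scale d m"
    then have "c * m y = d * m y"
      by (metis ga_scale_apply)
    then show "c = d"
      using \<open>m y \<noteq> 0\<close> by simp
  qed
  then show ?thesis
    using card_Ints[OF assms(1)] by (simp add: card_image)
qed

context finite_group
begin

lemma finite_ga_prime_span:
  assumes "CHAR('k::field) > 0"
  shows "finite (ga_prime_span G (m :: 'a \<Rightarrow> 'k))"
proof -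
  have "finite (\<int> :: 'k set)"
    using card_Ints[OF assms] assms card_ge_0_finite by force
  then have "finite {x :: 'a \<Rightarrow> 'k. \<forall>y. (y \<in> carrier G \<longrightarrow> x y \<in> \<int>) \<and> (y \<notin> carrier G \<longrightarrow> x y = 0)}"
    using finite_carrier by (intro finite_set_of_finite_funs)
  moreover have "{x :: 'a \<Rightarrow> 'k. x \<in> grpalg G \<and> range x \<subseteq> \<int>}
      = {x. \<forall>y. (y \<in> carrier G \<longrightarrow> x y \<in> \<int>) \<and> (y \<notin> carrier G \<longrightarrow> x y = 0)}"
    by (auto simp: grpalg_def) (metis Ints_0)
  ultimately show ?thesis
    unfolding ga_prime_span_def by (simp add: setcompr_eq_image)
qed

lemma ga_prime_span_subset: "ga_submod G M \<Longrightarrow> m \<in> M \<Longrightarrow> ga_prime_span G m \<subseteq> M"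
  by (auto simp: ga_prime_span_def ga_submod_def)

lemma zero_in_ga_prime_span: "0 \<in> ga_prime_span G m"
  using gmult_zero_left[of G m] by (force simp: ga_prime_span_def grpalg_def)

lemma ga_prime_span_translate:
  assumes "m \<in> grpalg G" and "s \<in> ga_prime_span G m" and "c \<in> \<int>"
  shows "s + ga_scale c m \<in> ga_prime_span G m"
proof -
  obtain x where x: "s = gmult G x m" "x \<in> grpalg G" "range x \<subseteq> \<int>"
    using assms(2) unfolding ga_prime_span_def by blast
  have "s + ga_scale c m = gmult G (x + ga_scale c (ga_delta \<one>)) m"
    using x(1) assms(1) by (simp add: gmult_add_left gmult_scale_left gmult_delta_one_left)
  moreover have "x + ga_scale c (ga_delta \<one>) \<in> grpalg G"
    using x(2) by (simp add: grpalg_def ga_delta_def)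
  moreover have "range (x + ga_scale c (ga_delta \<one>)) \<subseteq> \<int>"
    using x(3) assms(3) by (auto simp: ga_delta_def)
  ultimately show ?thesis
    unfolding ga_prime_span_def by blast
qed

lemma ga_prime_span_delta:
  assumes "g \<in> carrier G" and "s \<in> ga_prime_span G m"
  shows "gmult G (ga_delta g) s \<in> ga_prime_span G m"
proof -
  obtain x where x: "s = gmult G x m" "x \<in> grpalg G" "range x \<subseteq> \<int>"
    using assms(2) unfolding ga_prime_span_def by blast
  have "gmult G (ga_delta g) s = gmult G (gmult G (ga_delta g) x) m"
    by (simp add: x(1) gmult_assoc)
  moreover have "range (gmult G (ga_delta g) x) \<subseteq> \<int>"
    using x(3) assms(1) by (auto simp: gmult_delta_left)
  ultimately show ?thesis
    using gmult_in_grpalg unfolding ga_prime_span_def by blast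
qed

lemma CHAR_dvd_card_ga_prime_span:
  assumes "CHAR('k::field) > 0" and "m \<in> grpalg G" and "m \<noteq> 0"
  shows "CHAR('k) dvd card (ga_prime_span G (m :: 'a \<Rightarrow> 'k))"
proof -
  let ?H = "(\<lambda>c. ga_scale c m) ` (\<int> :: 'k set)"
  have scale_add: "ga_scale c m + ga_scale d m = ga_scale (c + d) m" for c d
    by (simp add: fun_eq_iff distrib_right)
  have scale_uminus: "- ga_scale c m = ga_scale (- c) m" for c
    by (simp add: fun_eq_iff)
  have "card ?H = CHAR('k)"
    by (rule card_scaled_Ints[OF assms(1,3)])
  moreover have "card ?H dvd card (ga_prime_span G m)"
  proof (rule card_dvd_card_if_translation_closed)
    show "finite (ga_prime_span G m)"
      by (rule finite_ga_prime_span[OF assms(1)])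
    have "0 = ga_scale 0 m"
      by (simp add: fun_eq_iff)
    then show "0 \<in> ?H"
      using Ints_0 by (rule image_eqI)
    show "a + b \<in> ?H" if ab: "a \<in> ?H" "b \<in> ?H" for a b
    proof -
      obtain c d where "c \<in> \<int>" "d \<in> \<int>" "a = ga_scale c m" "b = ga_scale d m"
        using ab by blast
      then have "a + b = ga_scale (c + d) m"
        by (simp add: scale_add)
      then show ?thesis
        using Ints_add[OF \<open>c \<in> \<int>\<close> \<open>d \<in> \<int>\<close>] by (rule image_eqI)
    qed
    show "- a \<in> ?H" if a: "a \<in> ?H" for a
    proof -
      obtain c where "c \<in> \<int>" "a = ga_scale c m"
        using a by blast
      then have "- a = ga_scale (- c) m"
        by (simp add: scale_uminus)
      then show ?thesis
        using Ints_minus[OF \<open>c \<in> \<int>\<close>] by (rule image_eqI)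
    qed
    show "s + h \<in> ga_prime_span G m" if "s \<in> ga_prime_span G m" "h \<in> ?H" for s h
      using that assms(2) ga_prime_span_translate by blast
  qed
  ultimately show ?thesis
    by simp
qed

end

section \<open>The augmentation ideal and the powers of the radical\<close>

definition ga_aug_ideal :: "('g, 'm) monoid_scheme \<Rightarrow> ('g \<Rightarrow> 'k::field) set" where
  "ga_aug_ideal G = {f \<in> grpalg G. ga_aug G f = 0}"

context group
begin

lemma ga_submod_aug_ideal: "ga_submod G (ga_aug_ideal G :: ('a \<Rightarrow> 'k::field) set)"
proof -
  have aug_add: "ga_aug G (a + b) = ga_aug G a + ga_aug G b" for a b :: "'a \<Rightarrow> 'k"
    by (simp add: ga_aug_def sum.distrib)
  have "ga_aug G (0 :: 'a \<Rightarrow> 'k) = 0"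
    by (simp add: ga_aug_def)
  then show ?thesis
    by (auto simp: ga_submod_def ga_aug_ideal_def ga_aug_gmult gmult_in_grpalg aug_add
        zero_in_grpalg add_in_grpalg)
qed

lemma ga_submod_grpalg: "ga_submod G (grpalg G)"
  by (simp add: ga_submod_def zero_in_grpalg add_in_grpalg gmult_in_grpalg)

lemma ga_submod_ga_prod:
  assumes "ga_submod G A"
  shows "ga_submod G (ga_prod G A B)"
proof -
  have "x \<in> grpalg G \<and> (\<forall>r\<in>grpalg G. gmult G r x \<in> ga_prod G A B)" if "x \<in> ga_prod G A B" for x
    using that
    \<comment> \<open>the cases of ga_prod.induct mention eta-expanded elements such as \<open>\<lambda>a. 0 a\<close>,
      which the pointwise rules zero_fun_apply and plus_fun_apply would take apart\<close>
    by (rule ga_prod.induct)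
      (use assms in \<open>auto simp: zero_in_grpalg add_in_grpalg gmult_in_grpalg gmult_zero_right
        gmult_add_right gmult_assoc[symmetric] ga_submod_def
        simp del: zero_fun_apply plus_fun_apply intro: ga_prod.intros\<close>)
  then show ?thesis
    by (auto simp: ga_submod_def intro: ga_prod.zero ga_prod.add)
qed

lemma ga_submod_jpow: "ga_submod G (ga_jpow G i)"
  by (induction i) (simp_all add: ga_submod_grpalg ga_submod_ga_prod)

lemma ga_prod_subset_aug_ideal:
  fixes A B :: "('a \<Rightarrow> 'k::field) set"
  assumes "B \<subseteq> ga_aug_ideal G"
  shows "ga_prod G A B \<subseteq> ga_aug_ideal G"
proof
  have "ga_submod G (ga_aug_ideal G :: ('a \<Rightarrow> 'k) set)"
    by (rule ga_submod_aug_ideal)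
  fix x assume "x \<in> ga_prod G A B"
  then show "x \<in> ga_aug_ideal G"
    by (rule ga_prod.induct) (use assms \<open>ga_submod G (ga_aug_ideal G)\<close> in
        \<open>auto simp: ga_submod_def ga_aug_ideal_def ga_aug_gmult gmult_in_grpalg
          simp del: zero_fun_apply plus_fun_apply\<close>)
qed

end

lemma (in finite_group) delta_one_notin_aug_ideal: "ga_delta \<one> \<notin> ga_aug_ideal G"
  by (simp add: ga_aug_ideal_def ga_aug_delta)

section \<open>Left ideals of the group algebra of a p-group\<close>

locale p_group = group +
  fixes p n :: nat
  assumes prime_p: "prime p" and card_carrier: "card (carrier G) = p ^ n"

sublocale p_group \<subseteq> finite_group
proof
  have "card (carrier G) > 0"
    using card_carrier prime_p by (simp add: prime_gt_0_nat)
  then show "finite (carrier G)"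
    by (rule card_ge_0_finite)
qed

context p_group
begin

lemma nonzero_fixed_point_in_ga_prime_span:
  fixes m :: "'a \<Rightarrow> 'k::field"
  assumes char: "CHAR('k) = p" and "m \<in> grpalg G" and "m \<noteq> 0"
  obtains s where "s \<in> ga_prime_span G m" and "s \<noteq> 0"
    and "\<And>g. g \<in> carrier G \<Longrightarrow> gmult G (ga_delta g) s = s"
proof -
  define S where "S = ga_prime_span G m"
  define F where "F = {s \<in> S. \<forall>g\<in>carrier G. gmult G (ga_delta g) s = s}"
  have char_pos: "CHAR('k) > 0"
    using char prime_p prime_gt_0_nat by simp
  have "S \<subseteq> grpalg G"
    unfolding S_def ga_prime_span_def using gmult_in_grpalg by blast
  then interpret S: group_action G S "\<lambda>g. \<lambda>s\<in>S. gmult G (ga_delta g) s"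
    using ga_prime_span_delta unfolding S_def by (rule left_translation_group_action)
  have "F = {s \<in> S. \<forall>g\<in>carrier G. (\<lambda>s\<in>S. gmult G (ga_delta g) s) s = s}"
    unfolding F_def by auto
  then have "card F mod p = card S mod p"
    using S.card_fixed_points_mod_eq[OF _ prime_p] finite_ga_prime_span[OF char_pos] card_carrier
    unfolding S_def order_def by simp
  also have "\<dots> = 0"
    using CHAR_dvd_card_ga_prime_span[OF char_pos assms(2,3)] char unfolding S_def by simp
  finally have "p dvd card F"
    by (simp add: mod_eq_0_iff_dvd)
  have "0 \<in> F"
    unfolding F_def S_def by (simp add: zero_in_ga_prime_span gmult_zero_right)
  moreover have "F \<noteq> {0}"
  proof
    assume "F = {0}"
    then show False
      using \<open>p dvd card F\<close> prime_p by simp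
  qed
  ultimately show ?thesis
    using that unfolding F_def S_def by blast
qed

lemma norm_in_ga_submod:
  fixes M :: "('a \<Rightarrow> 'k::field) set"
  assumes char: "CHAR('k) = p" and M: "ga_submod G M" and "m \<in> M" and "m \<noteq> 0"
  shows "ga_norm G \<in> M"
proof -
  have "m \<in> grpalg G"
    using M \<open>m \<in> M\<close> unfolding ga_submod_def by blast
  then obtain s where "s \<in> ga_prime_span G m" "s \<noteq> 0"
    and fixed: "\<And>g. g \<in> carrier G \<Longrightarrow> gmult G (ga_delta g) s = s"
    using nonzero_fixed_point_in_ga_prime_span[OF char _ \<open>m \<noteq> 0\<close>] by blast
  then have "s \<in> M"
    using ga_prime_span_subset[OF M \<open>m \<in> M\<close>] by blast
  define c where "c = s \<one>"
  have "s \<in> grpalg G"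
    using M \<open>s \<in> M\<close> unfolding ga_submod_def by blast
  then have s_eq: "s = ga_scale c (ga_norm G)"
    unfolding c_def using fixed by (rule fixed_eq_scale_norm)
  then have "c \<noteq> 0"
    using \<open>s \<noteq> 0\<close> by (auto simp: fun_eq_iff)
  then have "ga_norm G = ga_scale (inverse c) s"
    using s_eq by (simp add: fun_eq_iff ga_norm_def)
  then show ?thesis
    using ga_submod_scale[OF M \<open>s \<in> M\<close>] by simp
qed

lemma left_invertible_if_aug_nonzero:
  fixes x :: "'a \<Rightarrow> 'k::field"
  assumes char: "CHAR('k) = p" and "x \<in> grpalg G" and "ga_aug G x \<noteq> 0"
  shows "\<exists>y\<in>grpalg G. gmult G y x = ga_delta \<one>"
proof (rule left_invertible_if_not_right_zero_divisor[OF assms(2)])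
  fix y assume y: "y \<in> grpalg G" "gmult G y x = 0"
  let ?K = "{z \<in> grpalg G. gmult G z x = 0}"
  have "ga_submod G ?K"
    by (auto simp: ga_submod_def zero_in_grpalg add_in_grpalg gmult_in_grpalg gmult_zero_left
        gmult_add_left gmult_assoc gmult_zero_right)
  moreover have "ga_norm G \<notin> ?K"
  proof
    assume "ga_norm G \<in> ?K"
    then have "ga_scale (ga_aug G x) (ga_norm G) \<one> = 0"
      by (simp add: gmult_norm_left)
    then show False
      using assms(3) by (simp add: ga_norm_def)
  qed
  ultimately show "y = 0"
    using norm_in_ga_submod[OF char] y by blast
qed

lemma ga_submod_eq_grpalg_if_aug_nonzero:
  fixes M :: "('a \<Rightarrow> 'k::field) set"
  assumes "CHAR('k) = p" and M: "ga_submod G M" and "x \<in> M" and "ga_aug G x \<noteq> 0"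
  shows "M = grpalg G"
proof -
  have "x \<in> grpalg G"
    using M \<open>x \<in> M\<close> by (auto simp: ga_submod_def)
  then obtain y where "y \<in> grpalg G" "gmult G y x = ga_delta \<one>"
    using left_invertible_if_aug_nonzero assms(1,4) by blast
  then have "ga_delta \<one> \<in> M"
    using M \<open>x \<in> M\<close> by (metis ga_submod_def)
  then show ?thesis
    using M by (rule ga_submod_eq_grpalg_if_delta_one[rotated])
qed

lemma ga_indecomposable_if_submod:
  fixes M :: "('a \<Rightarrow> 'k::field) set"
  assumes char: "CHAR('k) = p" and "ga_submod G M" and "M \<noteq> {0}"
  shows "ga_indecomposable G M"
  unfolding ga_indecomposable_def
proof (intro conjI allI impI)
  show "M \<noteq> {0}"
    by fact
  fix A B :: "('a \<Rightarrow> 'k) set"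
  assume "ga_submod G A \<and> ga_submod G B \<and> A \<subseteq> M \<and> B \<subseteq> M \<and> A \<inter> B = {0}
    \<and> M = {a + b | a b. a \<in> A \<and> b \<in> B}"
  then have A: "ga_submod G A" and B: "ga_submod G B" and "A \<inter> B = {0}"
    by blast+
  show "A = {0} \<or> B = {0}"
  proof (rule ccontr)
    assume "\<not> (A = {0} \<or> B = {0})"
    then obtain a b where "a \<in> A" "a \<noteq> 0" "b \<in> B" "b \<noteq> 0"
      using A B by (auto simp: ga_submod_def)
    then have "ga_norm G \<in> A \<inter> B"
      using norm_in_ga_submod[OF char A] norm_in_ga_submod[OF char B] by blast
    then show False
      using \<open>A \<inter> B = {0}\<close> ga_norm_nonzero by auto
  qed
qed

lemma ga_projective_submod_eq_grpalg:
  fixes Q :: "('a \<Rightarrow> 'k::field) set"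
  assumes char: "CHAR('k) = p" and Q: "ga_submod G Q" "Q \<noteq> {0}" and "ga_projective G Q"
  shows "Q = grpalg G"
proof -
  obtain q where "q \<in> Q" "q \<noteq> 0"
    using Q by (auto simp: ga_submod_def)
  then have "ga_norm G \<in> Q"
    using norm_in_ga_submod[OF char Q(1)] by blast
  then obtain u where "u \<in> Q" "ga_aug G u = 1"
    using ga_projective_contains_aug_one \<open>ga_projective G Q\<close> by blast
  then show ?thesis
    using ga_submod_eq_grpalg_if_aug_nonzero[OF char Q(1)] by simp
qed

lemma ga_projective_free_if_submod:
  fixes M :: "('a \<Rightarrow> 'k::field) set"
  assumes "CHAR('k) = p" and "ga_submod G M" and "M \<noteq> grpalg G"
  shows "ga_projective_free G M"
  unfolding ga_projective_free_def
proof (intro allI impI notI)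
  fix Q :: "('a \<Rightarrow> 'k) set"
  assume "ga_summand G Q M \<and> Q \<noteq> {0}" and "ga_projective G Q"
  then have "Q = grpalg G" and "Q \<subseteq> M"
    using ga_projective_submod_eq_grpalg[OF assms(1)] by (auto simp: ga_summand_def)
  then show False
    using assms(2,3) by (auto simp: ga_submod_def)
qed

lemma ga_max_left_aug_ideal:
  assumes "CHAR('k::field) = p"
  shows "ga_max_left G (ga_aug_ideal G :: ('a \<Rightarrow> 'k) set)"
  unfolding ga_max_left_def
proof (intro conjI allI impI)
  show "ga_submod G (ga_aug_ideal G :: ('a \<Rightarrow> 'k) set)"
    by (rule ga_submod_aug_ideal)
  show "ga_aug_ideal G \<noteq> (grpalg G :: ('a \<Rightarrow> 'k) set)"
    using delta_one_notin_aug_ideal ga_delta_in_grpalg[OF one_closed] by blast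
  fix N :: "('a \<Rightarrow> 'k) set"
  assume N: "ga_submod G N \<and> ga_aug_ideal G \<subseteq> N"
  show "N = ga_aug_ideal G \<or> N = grpalg G"
  proof (rule disjCI)
    assume "N \<noteq> grpalg G"
    then have "ga_aug G x = 0" if "x \<in> N" for x
      using ga_submod_eq_grpalg_if_aug_nonzero[OF assms] N that by blast
    then show "N = ga_aug_ideal G"
      using N by (auto simp: ga_aug_ideal_def ga_submod_def)
  qed
qed

lemma ga_jpow_neq_grpalg:
  assumes "CHAR('k::field) = p" and "i \<ge> 1"
  shows "ga_jpow G i \<noteq> (grpalg G :: ('a \<Rightarrow> 'k) set)"
proof -
  have "ga_jacobson G \<subseteq> (ga_aug_ideal G :: ('a \<Rightarrow> 'k) set)"
    using ga_max_left_aug_ideal[OF assms(1)] unfolding ga_jacobson_def by blast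
  moreover obtain j where "i = Suc j"
    using assms(2) by (cases i) auto
  ultimately have "ga_jpow G i \<subseteq> (ga_aug_ideal G :: ('a \<Rightarrow> 'k) set)"
    by (simp add: ga_prod_subset_aug_ideal)
  then show ?thesis
    using delta_one_notin_aug_ideal ga_delta_in_grpalg[OF one_closed] by blast
qed

end

theorem lemma3p3:
  fixes G :: "('g, 'm) monoid_scheme" and p :: nat and n :: nat
    and I :: "('g \<Rightarrow> 'k::field) set"
  assumes "group G" and "finite (carrier G)" and "prime p"
    and "card (carrier G) = p ^ n"
    and "CHAR('k) = p"
  shows "(ga_ideal G I \<and> I \<noteq> {0} \<and> I \<noteq> grpalg G
            \<longrightarrow> ga_indecomposable G I \<and> ga_projective_free G I)
       \<and> (\<forall>i::nat. i \<ge> 1 \<and> ga_jpow G i \<noteq> ({0} :: ('g \<Rightarrow> 'k) set)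
            \<longrightarrow> ga_indecomposable G (ga_jpow G i :: ('g \<Rightarrow> 'k) set)
              \<and> ga_projective_free G (ga_jpow G i :: ('g \<Rightarrow> 'k) set))"
proof -
  interpret p_group G p n
    by (intro p_group.intro p_group_axioms.intro) (rule assms)+
  have proper_submod: "ga_indecomposable G M \<and> ga_projective_free G M"
    if "ga_submod G M" "M \<noteq> {0}" "M \<noteq> grpalg G" for M :: "('g \<Rightarrow> 'k) set"
    using ga_indecomposable_if_submod[OF assms(5) that(1,2)]
      ga_projective_free_if_submod[OF assms(5) that(1,3)] by (rule conjI)
  show ?thesis
  proof (rule conjI; intro allI impI)
    assume "ga_ideal G I \<and> I \<noteq> {0} \<and> I \<noteq> grpalg G"
    then show "ga_indecomposable G I \<and> ga_projective_free G I"
      by (intro proper_submod) (auto simp: ga_ideal_def ga_submod_def)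
  next
    fix i :: nat
    assume "1 \<le> i \<and> ga_jpow G i \<noteq> ({0} :: ('g \<Rightarrow> 'k) set)"
    then show "ga_indecomposable G (ga_jpow G i :: ('g \<Rightarrow> 'k) set)
        \<and> ga_projective_free G (ga_jpow G i :: ('g \<Rightarrow> 'k) set)"
      using ga_jpow_neq_grpalg[OF assms(5)] by (intro proper_submod ga_submod_jpow) auto
  qed
qed

end
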